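(* Let $\mathfrak A$ be a real Banach space of dimension $2$ with norm $|\cdot|_{\mathfrak A}$ and closed unit ball $K$. For every Borel probability measure $\nu$ supported on $K$, \[\Delta(\nu)\leq\frac{48}{31}+\frac{6}{31}\sqrt2 \;(=1.8221\ldots).\] In particular $\Delta(\nu)<\frac32+\frac14\sqrt2$.
   Context: For a real finite-dimensional Banach space $\mathfrak A$ with norm $|\cdot|_{\mathfrak A}$ and closed unit ball $K$, and a Borel probability measure $\nu$ supported on $K$, the averaged self-distance of $\nu$ is \[\Delta(\nu)=\int_{x\in K}\int_{y\in K}|x-y|_{\mathfrak A}\,d\nu(x)\,d\nu(y).\] *)

theory Defs
  imports "HOL-Probability.Probability"
begin

definition is_norm :: "('a::real_vector \<Rightarrow> real) \<Rightarrow> bool" where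
  "is_norm N \<longleftrightarrow>
     (\<forall>x. 0 \<le> N x) \<and> (\<forall>x. N x = 0 \<longleftrightarrow> x = 0) \<and>
     (\<forall>x y. N (x + y) \<le> N x + N y) \<and> (\<forall>c x. N (c *\<^sub>R x) = \<bar>c\<bar> * N x)"

definition unit_ball_N :: "('a \<Rightarrow> real) \<Rightarrow> 'a set" where
  "unit_ball_N N = {x. N x \<le> 1}"

definition avg_self_dist :: "('a::real_vector \<Rightarrow> real) \<Rightarrow> 'a measure \<Rightarrow> real" where
  "avg_self_dist N \<nu> = (\<integral>x. (\<integral>y. N (x - y) \<partial>\<nu>) \<partial>\<nu>)"

end

theory Submission
  imports Defs
begin

text \<open>Take an Auerbach basis \<open>u, v\<close> of the unit ball \<open>K\<close>, i.e. a pair in \<open>K\<close> maximising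
\<open>\<bar>det (u, v)\<bar>\<close>. In the dual coordinates \<open>c\<^sub>1, c\<^sub>2\<close> the ball \<open>K\<close> lies in the square
\<open>[-1,1]\<^sup>2\<close> and the norm is dominated by the \<open>l\<^sub>1\<close> distance of coordinates, so on \<open>K\<close> the
distance is at most \<open>min 2 l\<^sub>1\<close>. On the square this is bounded by \<open>2 - \<Sum>\<^sub>k f\<^sub>k(s) f\<^sub>k(t)\<close>
for sixteen functions \<open>f\<^sub>k\<close> supported on the quadrants and summing to \<open>2\<close>. Integrating
against \<open>\<nu> \<otimes> \<nu>\<close> and applying Cauchy-Schwarz to the sixteen means gives
\<open>\<Delta>(\<nu>) \<le> 2 - 2\<^sup>2/16 = 7/4\<close>, which is below both bounds of the theorem.\<close>

lemma is_norm_nonneg: "is_norm N \<Longrightarrow> 0 \<le> N x"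
  by (simp add: is_norm_def)

lemma is_norm_scaleR_add_le:
  assumes N: "is_norm N"
  shows "N (a *\<^sub>R u + b *\<^sub>R v) \<le> \<bar>a\<bar> * N u + \<bar>b\<bar> * N v"
proof -
  have "N (a *\<^sub>R u + b *\<^sub>R v) \<le> N (a *\<^sub>R u) + N (b *\<^sub>R v)"
    using N unfolding is_norm_def by blast
  also have "\<dots> = \<bar>a\<bar> * N u + \<bar>b\<bar> * N v"
    using N by (simp add: is_norm_def)
  finally show ?thesis .
qed

lemma is_norm_diff_le:
  assumes "is_norm N"
  shows "N (x - y) \<le> N x + N y"
  using is_norm_scaleR_add_le[OF assms, of 1 x "-1" y] by simp

lemma is_norm_convex_on:
  assumes "is_norm N"
  shows "convex_on UNIV N"
proof (rule convex_onI)
  fix t :: real and x y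
  assume "0 < t" "t < 1"
  then show "N ((1 - t) *\<^sub>R x + t *\<^sub>R y) \<le> (1 - t) * N x + t * N y"
    using is_norm_scaleR_add_le[OF assms, of "1 - t" x t y] by simp
qed simp

lemma is_norm_continuous_on:
  fixes N :: "'a::euclidean_space \<Rightarrow> real"
  assumes "is_norm N"
  shows "continuous_on S N"
  using convex_on_continuous[OF open_UNIV is_norm_convex_on[OF assms]] continuous_on_subset
  by blast

lemma compact_unit_ball_N:
  fixes N :: "'a::euclidean_space \<Rightarrow> real"
  assumes N: "is_norm N"
  shows "compact (unit_ball_N N)"
proof -
  obtain b :: 'a where "b \<in> Basis" using nonempty_Basis by blast
  then have "sphere 0 1 \<noteq> ({} :: 'a set)" by (auto simp: norm_Basis)
  then obtain p :: 'a where p: "p \<in> sphere 0 1" and p_min: "\<And>y. y \<in> sphere 0 1 \<Longrightarrow> N p \<le> N y"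
    using continuous_attains_inf[OF compact_sphere _ is_norm_continuous_on[OF N]] by blast
  have "p \<noteq> 0" using p by auto
  then have Np: "0 < N p" using N unfolding is_norm_def by (metis order_less_le)
  have "norm x \<le> 1 / N p" if "N x \<le> 1" for x
  proof (cases "x = 0")
    case False
    then have "N p \<le> N ((1 / norm x) *\<^sub>R x)" by (intro p_min) simp
    also have "\<dots> = N x / norm x" using N by (simp add: is_norm_def)
    finally show ?thesis using False Np that by (simp add: field_simps)
  qed (use Np in simp)
  then have "bounded (unit_ball_N N)"
    by (intro boundedI[of _ "1 / N p"]) (simp add: unit_ball_N_def)
  moreover have "closed (unit_ball_N N)"
    unfolding unit_ball_N_def by (intro closed_Collect_le continuous_on_const is_norm_continuous_on N)
  ultimately show ?thesis by (simp add: compact_eq_bounded_closed)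
qed

definition det2 :: "real^2 \<Rightarrow> real^2 \<Rightarrow> real" where
  "det2 u v = u $ 1 * v $ 2 - u $ 2 * v $ 1"

lemma det2_cramer:
  assumes "det2 u v \<noteq> 0"
  shows "x = (det2 x v / det2 u v) *\<^sub>R u + (det2 u x / det2 u v) *\<^sub>R v"
proof -
  have "x = (1 / det2 u v) *\<^sub>R (det2 u v *\<^sub>R x)" using assms by simp
  also have "det2 u v *\<^sub>R x = det2 x v *\<^sub>R u + det2 u x *\<^sub>R v"
    by (simp add: vec_eq_iff forall_2 det2_def algebra_simps)
  finally show ?thesis by (simp add: scaleR_add_right)
qed

lemma det2_diff_left: "det2 (x - y) v = det2 x v - det2 y v"
  by (simp add: det2_def algebra_simps)

lemma det2_diff_right: "det2 u (x - y) = det2 u x - det2 u y"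
  by (simp add: det2_def algebra_simps)

lemma exists_auerbach_basis:
  fixes N :: "real^2 \<Rightarrow> real"
  assumes N: "is_norm N"
  obtains u v where "u \<in> unit_ball_N N" "v \<in> unit_ball_N N" "det2 u v \<noteq> 0"
    "\<And>x. x \<in> unit_ball_N N \<Longrightarrow> \<bar>det2 x v\<bar> \<le> \<bar>det2 u v\<bar> \<and> \<bar>det2 u x\<bar> \<le> \<bar>det2 u v\<bar>"
proof -
  let ?K = "unit_ball_N N"
  have "N 0 = 0" using N by (simp add: is_norm_def)
  then have "0 \<in> ?K" by (simp add: unit_ball_N_def)
  moreover have "continuous_on (?K \<times> ?K) (\<lambda>p. \<bar>det2 (fst p) (snd p)\<bar>)"
    unfolding det2_def by (intro continuous_intros)
  ultimately obtain q where q: "q \<in> ?K \<times> ?K"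
    and q_max: "\<And>p. p \<in> ?K \<times> ?K \<Longrightarrow> \<bar>det2 (fst p) (snd p)\<bar> \<le> \<bar>det2 (fst q) (snd q)\<bar>"
    using continuous_attains_sup[OF compact_Times[OF compact_unit_ball_N[OF N] compact_unit_ball_N[OF N]]]
    by blast
  obtain u v where q_eq: "q = (u, v)" by (cases q)
  have uv: "(u, v) \<in> ?K \<times> ?K" using q q_eq by simp
  have max: "\<bar>det2 x y\<bar> \<le> \<bar>det2 u v\<bar>" if "(x, y) \<in> ?K \<times> ?K" for x y
    using q_max[OF that] q_eq by simp
  define a b where "a = N (axis 1 1)" and "b = N (axis 2 1)"
  have "a > 0" "b > 0"
    using N unfolding a_def b_def is_norm_def by (simp_all add: order_less_le axis_eq_0_iff)
  then have "((1 / a) *\<^sub>R axis 1 1, (1 / b) *\<^sub>R axis 2 1) \<in> ?K \<times> ?K"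
    using N by (simp add: unit_ball_N_def is_norm_def a_def b_def)
  from max[OF this] have "1 / (a * b) \<le> \<bar>det2 u v\<bar>"
    using \<open>a > 0\<close> \<open>b > 0\<close> by (simp add: det2_def axis_def)
  then have "det2 u v \<noteq> 0" using \<open>a > 0\<close> \<open>b > 0\<close> by (auto simp: field_simps)
  with uv max show ?thesis by (intro that) auto
qed

lemma auerbach_coordinates:
  fixes N :: "real^2 \<Rightarrow> real"
  assumes N: "is_norm N"
  obtains c1 c2 :: "real^2 \<Rightarrow> real"
  where "continuous_on UNIV c1" "continuous_on UNIV c2"
    "\<And>x. x \<in> unit_ball_N N \<Longrightarrow> \<bar>c1 x\<bar> \<le> 1 \<and> \<bar>c2 x\<bar> \<le> 1"
    "\<And>x y. N (x - y) \<le> \<bar>c1 x - c1 y\<bar> + \<bar>c2 x - c2 y\<bar>"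
proof -
  obtain u v where u: "u \<in> unit_ball_N N" and v: "v \<in> unit_ball_N N" and d: "det2 u v \<noteq> 0"
    and max: "\<And>x. x \<in> unit_ball_N N \<Longrightarrow> \<bar>det2 x v\<bar> \<le> \<bar>det2 u v\<bar> \<and> \<bar>det2 u x\<bar> \<le> \<bar>det2 u v\<bar>"
    using exists_auerbach_basis[OF N] by blast
  define c1 where "c1 x = det2 x v / det2 u v" for x
  define c2 where "c2 x = det2 u x / det2 u v" for x
  have "continuous_on UNIV c1" "continuous_on UNIV c2"
    unfolding c1_def c2_def det2_def by (intro continuous_intros; use d in \<open>simp add: det2_def\<close>)+
  moreover have "\<bar>c1 x\<bar> \<le> 1 \<and> \<bar>c2 x\<bar> \<le> 1" if "x \<in> unit_ball_N N" for x
    using max[OF that] d by (simp add: c1_def c2_def abs_divide)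
  moreover have "N (x - y) \<le> \<bar>c1 x - c1 y\<bar> + \<bar>c2 x - c2 y\<bar>" for x y
  proof -
    have "x - y = (c1 x - c1 y) *\<^sub>R u + (c2 x - c2 y) *\<^sub>R v"
      using det2_cramer[OF d, of "x - y"]
      by (simp add: c1_def c2_def det2_diff_left det2_diff_right diff_divide_distrib)
    then have "N (x - y) \<le> \<bar>c1 x - c1 y\<bar> * N u + \<bar>c2 x - c2 y\<bar> * N v"
      by (simp add: is_norm_scaleR_add_le[OF N])
    also have "\<dots> \<le> \<bar>c1 x - c1 y\<bar> + \<bar>c2 x - c2 y\<bar>"
      using u v by (intro add_mono mult_left_le) (auto simp: unit_ball_N_def)
    finally show ?thesis .
  qed
  ultimately show ?thesis by (rule that)
qed

text \<open>The index \<open>(b\<^sub>1, b\<^sub>2, i, j)\<close> selects the quadrant \<open>{s. (0 \<le> s\<^sub>1) = b\<^sub>1 \<and> (0 \<le> s\<^sub>2) = b\<^sub>2}\<close>,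
a coordinate (\<open>i\<close>) and one of the functions \<open>\<bar>s\<^sub>i\<bar>\<close>, \<open>1 - \<bar>s\<^sub>i\<bar>\<close> (\<open>j\<close>) on it.\<close>

definition quadrant_test :: "bool \<times> bool \<times> bool \<times> bool \<Rightarrow> real \<Rightarrow> real \<Rightarrow> real" where
  "quadrant_test k s1 s2 = (case k of (b1, b2, i, j) \<Rightarrow>
     if (0 \<le> s1) = b1 \<and> (0 \<le> s2) = b2
     then (if j then \<bar>if i then s1 else s2\<bar> else 1 - \<bar>if i then s1 else s2\<bar>) else 0)"

lemma sum_UNIV_bool4:
  fixes f :: "bool \<times> bool \<times> bool \<times> bool \<Rightarrow> 'a::comm_monoid_add"
  shows "(\<Sum>k\<in>UNIV. f k) = (\<Sum>b1\<in>UNIV. \<Sum>b2\<in>UNIV. \<Sum>i\<in>UNIV. \<Sum>j\<in>UNIV. f (b1, b2, i, j))"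
  by (simp flip: UNIV_Times_UNIV add: sum.cartesian_product)

lemma card_UNIV_bool4: "card (UNIV :: (bool \<times> bool \<times> bool \<times> bool) set) = 16"
  by (simp add: card_UNIV_bool flip: UNIV_Times_UNIV)

lemma sum_quadrant_test: "(\<Sum>k\<in>UNIV. quadrant_test k s1 s2) = 2"
  unfolding sum_UNIV_bool4 by (simp add: UNIV_bool quadrant_test_def)

lemma quadrant_test_kernel:
  "(\<Sum>k\<in>UNIV. quadrant_test k s1 s2 * quadrant_test k t1 t2) =
    (if (0 \<le> s1) = (0 \<le> t1) \<and> (0 \<le> s2) = (0 \<le> t2)
     then (1 - \<bar>s1\<bar>) * (1 - \<bar>t1\<bar>) + \<bar>s1\<bar> * \<bar>t1\<bar> + ((1 - \<bar>s2\<bar>) * (1 - \<bar>t2\<bar>) + \<bar>s2\<bar> * \<bar>t2\<bar>)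
     else 0)"
  unfolding sum_UNIV_bool4 by (auto simp add: UNIV_bool quadrant_test_def)

lemma abs_quadrant_test_le: "\<bar>s1\<bar> \<le> 1 \<Longrightarrow> \<bar>s2\<bar> \<le> 1 \<Longrightarrow> \<bar>quadrant_test k s1 s2\<bar> \<le> 1"
  unfolding quadrant_test_def by (cases k) auto

lemma borel_measurable_quadrant_test:
  fixes f g :: "'a \<Rightarrow> real"
  assumes [measurable]: "f \<in> borel_measurable M" "g \<in> borel_measurable M"
  shows "(\<lambda>x. quadrant_test k (f x) (g x)) \<in> borel_measurable M"
  unfolding quadrant_test_def by (cases k) measurable

lemma abs_diff_le_same_sign:
  fixes a b :: real
  assumes "\<bar>a\<bar> \<le> 1" "\<bar>b\<bar> \<le> 1" "(0 \<le> a) = (0 \<le> b)"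
  shows "\<bar>a - b\<bar> \<le> 1 - ((1 - \<bar>a\<bar>) * (1 - \<bar>b\<bar>) + \<bar>a\<bar> * \<bar>b\<bar>)"
proof -
  have "\<bar>a - b\<bar> = \<bar>\<bar>a\<bar> - \<bar>b\<bar>\<bar>" using assms(3) by (cases "0 \<le> a") auto
  moreover have "\<bar>a\<bar> * \<bar>b\<bar> \<le> \<bar>a\<bar>" "\<bar>a\<bar> * \<bar>b\<bar> \<le> \<bar>b\<bar>"
    using assms by (simp_all add: mult_left_le mult_left_le_one_le)
  ultimately show ?thesis by (simp add: algebra_simps) arith
qed

lemma min_l1_dist_le_quadrant_kernel:
  assumes "\<bar>s1\<bar> \<le> 1" "\<bar>s2\<bar> \<le> 1" "\<bar>t1\<bar> \<le> 1" "\<bar>t2\<bar> \<le> 1"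
  shows "min 2 (\<bar>s1 - t1\<bar> + \<bar>s2 - t2\<bar>)
    \<le> 2 - (\<Sum>k\<in>UNIV. quadrant_test k s1 s2 * quadrant_test k t1 t2)"
proof (cases "(0 \<le> s1) = (0 \<le> t1) \<and> (0 \<le> s2) = (0 \<le> t2)")
  case True
  then show ?thesis
    using abs_diff_le_same_sign[of s1 t1] abs_diff_le_same_sign[of s2 t2] assms
    unfolding quadrant_test_kernel by (intro min.coboundedI2) (simp; linarith)
qed (auto simp: quadrant_test_kernel)

lemma (in prob_space) double_integral_le_of_kernel_bound:
  fixes D :: "'a \<Rightarrow> 'a \<Rightarrow> real" and \<phi> :: "'i \<Rightarrow> 'a \<Rightarrow> real"
  assumes K: "prob K = 1" and I: "finite I"
    and \<phi>_meas: "\<And>k. k \<in> I \<Longrightarrow> \<phi> k \<in> borel_measurable M"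
    and \<phi>_bound: "\<And>k x. k \<in> I \<Longrightarrow> x \<in> K \<Longrightarrow> \<bar>\<phi> k x\<bar> \<le> B"
    and D_nonneg: "\<And>x y. x \<in> K \<Longrightarrow> y \<in> K \<Longrightarrow> 0 \<le> D x y"
    and D_le: "\<And>x y. x \<in> K \<Longrightarrow> y \<in> K \<Longrightarrow> D x y \<le> C - (\<Sum>k\<in>I. \<phi> k x * \<phi> k y)"
  shows "(\<integral>x. (\<integral>y. D x y \<partial>M) \<partial>M) \<le> C - (\<Sum>k\<in>I. (\<integral>x. \<phi> k x \<partial>M)\<^sup>2)"
proof -
  have AE_K: "AE x in M. x \<in> K" using K by (intro AE_prob_1) simp
  have int: "integrable M (\<phi> k)" if "k \<in> I" for k
    using AE_K by (intro integrable_const_bound[of _ B] \<phi>_meas that)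
      (auto elim!: eventually_mono intro: \<phi>_bound that)
  have int_kernel: "(\<integral>y. C - (\<Sum>k\<in>I. a k * \<phi> k y) \<partial>M) = C - (\<Sum>k\<in>I. a k * (\<integral>y. \<phi> k y \<partial>M))"
    and integrable_kernel: "integrable M (\<lambda>y. C - (\<Sum>k\<in>I. a k * \<phi> k y))" for a
    using int by (simp_all add: prob_space)
  have inner: "(\<integral>y. D x y \<partial>M) \<le> C - (\<Sum>k\<in>I. (\<integral>y. \<phi> k y \<partial>M) * \<phi> k x)" if x: "x \<in> K" for x
  proof -
    have "(\<integral>y. D x y \<partial>M) \<le> (\<integral>y. C - (\<Sum>k\<in>I. \<phi> k x * \<phi> k y) \<partial>M)"
    proof (rule integral_mono_AE'[OF integrable_kernel])
      show "AE y in M. D x y \<le> C - (\<Sum>k\<in>I. \<phi> k x * \<phi> k y)"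
        using AE_K by eventually_elim (rule D_le[OF x])
      show "AE y in M. 0 \<le> C - (\<Sum>k\<in>I. \<phi> k x * \<phi> k y)"
        using AE_K by eventually_elim (rule order_trans[OF D_nonneg[OF x] D_le[OF x]])
    qed
    also have "\<dots> = C - (\<Sum>k\<in>I. \<phi> k x * (\<integral>y. \<phi> k y \<partial>M))"
      by (rule int_kernel)
    finally show ?thesis by (simp add: mult.commute)
  qed
  have inner_nonneg: "0 \<le> (\<integral>y. D x y \<partial>M)" if "x \<in> K" for x
    using AE_K by (intro integral_nonneg_AE) (auto elim!: eventually_mono intro: D_nonneg that)
  have "(\<integral>x. (\<integral>y. D x y \<partial>M) \<partial>M) \<le> (\<integral>x. C - (\<Sum>k\<in>I. (\<integral>y. \<phi> k y \<partial>M) * \<phi> k x) \<partial>M)"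
  proof (rule integral_mono_AE'[OF integrable_kernel])
    show "AE x in M. (\<integral>y. D x y \<partial>M) \<le> C - (\<Sum>k\<in>I. (\<integral>y. \<phi> k y \<partial>M) * \<phi> k x)"
      using AE_K by eventually_elim (rule inner)
    show "AE x in M. 0 \<le> C - (\<Sum>k\<in>I. (\<integral>y. \<phi> k y \<partial>M) * \<phi> k x)"
      using AE_K by eventually_elim (rule order_trans[OF inner_nonneg inner])
  qed
  then show ?thesis by (simp add: int_kernel power2_eq_square)
qed

lemma (in prob_space) double_integral_le_of_kernel_bound_const_sum:
  fixes D :: "'a \<Rightarrow> 'a \<Rightarrow> real" and \<phi> :: "'i \<Rightarrow> 'a \<Rightarrow> real"
  assumes K: "prob K = 1" and I: "finite I" "I \<noteq> {}"
    and \<phi>_meas: "\<And>k. k \<in> I \<Longrightarrow> \<phi> k \<in> borel_measurable M"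
    and \<phi>_bound: "\<And>k x. k \<in> I \<Longrightarrow> x \<in> K \<Longrightarrow> \<bar>\<phi> k x\<bar> \<le> B"
    and \<phi>_sum: "\<And>x. x \<in> K \<Longrightarrow> (\<Sum>k\<in>I. \<phi> k x) = S"
    and D_nonneg: "\<And>x y. x \<in> K \<Longrightarrow> y \<in> K \<Longrightarrow> 0 \<le> D x y"
    and D_le: "\<And>x y. x \<in> K \<Longrightarrow> y \<in> K \<Longrightarrow> D x y \<le> C - (\<Sum>k\<in>I. \<phi> k x * \<phi> k y)"
  shows "(\<integral>x. (\<integral>y. D x y \<partial>M) \<partial>M) \<le> C - S\<^sup>2 / card I"
proof -
  have AE_K: "AE x in M. x \<in> K" using K by (intro AE_prob_1) simp
  have int: "integrable M (\<phi> k)" if "k \<in> I" for k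
    using AE_K by (intro integrable_const_bound[of _ B] \<phi>_meas that)
      (auto elim!: eventually_mono intro: \<phi>_bound that)
  have "(\<Sum>k\<in>I. (\<integral>x. \<phi> k x \<partial>M)) = (\<integral>x. (\<Sum>k\<in>I. \<phi> k x) \<partial>M)"
    using int by (simp add: Bochner_Integration.integral_sum)
  also have "\<dots> = (\<integral>x. S \<partial>M)"
    using AE_K by (intro integral_cong_AE borel_measurable_sum \<phi>_meas)
      (auto elim!: eventually_mono simp: \<phi>_sum)
  finally have "S\<^sup>2 \<le> (\<Sum>k\<in>I. (\<integral>x. \<phi> k x \<partial>M)\<^sup>2) * card I"
    using sum_squared_le_sum_of_squares[of "\<lambda>k. \<integral>x. \<phi> k x \<partial>M" I] by (simp add: prob_space)
  then have "S\<^sup>2 / card I \<le> (\<Sum>k\<in>I. (\<integral>x. \<phi> k x \<partial>M)\<^sup>2)"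
    using I by (simp add: divide_le_eq card_gt_0_iff)
  with double_integral_le_of_kernel_bound[OF K I(1) \<phi>_meas \<phi>_bound D_nonneg D_le]
  show ?thesis by simp
qed

lemma avg_self_dist_le_7_4:
  fixes N :: "real^2 \<Rightarrow> real" and \<nu> :: "(real^2) measure"
  assumes N: "is_norm N" and \<nu>: "prob_space \<nu>" "sets \<nu> = sets borel"
    and K: "measure \<nu> (unit_ball_N N) = 1"
  shows "avg_self_dist N \<nu> \<le> 7/4"
proof -
  interpret prob_space \<nu> by (rule \<nu>(1))
  obtain c1 c2 where c_cont: "continuous_on UNIV c1" "continuous_on UNIV c2"
    and c_bound: "\<And>x. x \<in> unit_ball_N N \<Longrightarrow> \<bar>c1 x\<bar> \<le> 1 \<and> \<bar>c2 x\<bar> \<le> 1"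
    and N_le: "\<And>x y. N (x - y) \<le> \<bar>c1 x - c1 y\<bar> + \<bar>c2 x - c2 y\<bar>"
    using auerbach_coordinates[OF N] by blast
  have c_meas: "c1 \<in> borel_measurable \<nu>" "c2 \<in> borel_measurable \<nu>"
    using c_cont by (simp_all add: measurable_cong_sets[OF \<nu>(2) refl] borel_measurable_continuous_onI)
  have "avg_self_dist N \<nu> \<le> 2 - 2\<^sup>2 / card (UNIV :: (bool \<times> bool \<times> bool \<times> bool) set)"
    unfolding avg_self_dist_def
  proof (rule double_integral_le_of_kernel_bound_const_sum
      [where K = "unit_ball_N N" and \<phi> = "\<lambda>k x. quadrant_test k (c1 x) (c2 x)" and B = 1])
    fix x y assume x: "x \<in> unit_ball_N N" and y: "y \<in> unit_ball_N N"
    have "N (x - y) \<le> 2"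
      using is_norm_diff_le[OF N, of x y] x y by (simp add: unit_ball_N_def)
    then have "N (x - y) \<le> min 2 (\<bar>c1 x - c1 y\<bar> + \<bar>c2 x - c2 y\<bar>)"
      using N_le by simp
    also have "\<dots> \<le> 2 - (\<Sum>k\<in>UNIV. quadrant_test k (c1 x) (c2 x) * quadrant_test k (c1 y) (c2 y))"
      using c_bound[OF x] c_bound[OF y] by (intro min_l1_dist_le_quadrant_kernel) auto
    finally show "N (x - y)
      \<le> 2 - (\<Sum>k\<in>UNIV. quadrant_test k (c1 x) (c2 x) * quadrant_test k (c1 y) (c2 y))" .
  qed (use K c_bound in \<open>auto intro: borel_measurable_quadrant_test c_meas abs_quadrant_test_le
        is_norm_nonneg[OF N] simp: sum_quadrant_test\<close>)
  then show ?thesis by (simp add: card_UNIV_bool4)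
qed

theorem mainTheorem1:
  fixes N :: "real^2 \<Rightarrow> real" and \<nu> :: "(real^2) measure"
  assumes "is_norm N"
    and "prob_space \<nu>"
    and "sets \<nu> = sets borel"
    and "measure \<nu> (unit_ball_N N) = 1"
  shows "avg_self_dist N \<nu> \<le> 48/31 + 6/31 * sqrt 2 \<and>
         avg_self_dist N \<nu> < 3/2 + 1/4 * sqrt 2"
proof -
  have "7/5 \<le> sqrt (2::real)" by (rule real_le_rsqrt) (simp add: power2_eq_square)
  with avg_self_dist_le_7_4[OF assms] show ?thesis by simp
qed

end
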